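(* Let $J\in\mathbb{S}$ and let $\Omega$ be a domain in $L_J$, symmetric with respect to the real axis and such that $\Omega\cap\mathbb{R}\neq\emptyset$. Let $\widetilde\Omega=\bigcup_{x+yJ\in\Omega}(x+y\mathbb{S})$ be its symmetric completion. Let $f:\Omega\to L_J$ be a holomorphic function and let $\tilde f:\widetilde\Omega\to\mathbb{H}$ be its (unique) regular extension. If $\tilde f(x_0+y_0J)=0$ with $y_0\neq0$, then $\tilde f(x_0+y_0L)=0$ for all $L\in\mathbb{S}$ if and only if $f(x_0+y_0J)=f(x_0-y_0J)=0$.
   Context: $\mathbb{H}$ denotes the quaternions, $\mathbb{S}=\{q\in\mathbb{H}: \mathrm{Re}(q)=0,\ |\mathrm{Im}(q)|=1\}$ the 2-sphere of imaginary units, $L_I=\mathbb{R}+\mathbb{R}I$ for $I\in\mathbb{S}$, and $x+y\mathbb{S}=\{x+yL:L\in\mathbb{S}\}$. A function $\Omega\to L_J$ is holomorphic if it is holomorphic under the identification $L_J\cong\mathbb{C}$, $x+yJ\mapsto x+iy$. A function $g:U\to\mathbb{H}$ on an open set $U\subseteq\mathbb{H}$ is (slice left) regular if for every $I\in\mathbb{S}$ its restriction to $U\cap L_I$ has continuous partial derivatives and satisfies $\left(\frac{\partial}{\partial x}+I\frac{\partial}{\partial y}\right)g(x+yI)=0$ there. The regular extension of $f$ is $\tilde f(x+yI)=\frac12[f(x+yJ)+f(x-yJ)]+I\frac12[J(f(x-yJ)-f(x+yJ))]$, the unique regular function on $\widetilde\Omega$ agreeing with $f$ on $\Omega$. *)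

theory Defs
  imports "HOL-Complex_Analysis.Complex_Analysis"
begin

datatype quat = Quat (qre: real) (qi: real) (qj: real) (qk: real)

instantiation quat :: "{zero, plus, minus, uminus, times}"
begin
definition "0 = Quat 0 0 0 0"
definition "p + q = Quat (qre p + qre q) (qi p + qi q) (qj p + qj q) (qk p + qk q)"
definition "p - q = Quat (qre p - qre q) (qi p - qi q) (qj p - qj q) (qk p - qk q)"
definition "- q = Quat (- qre q) (- qi q) (- qj q) (- qk q)"
definition "p * q = Quat
   (qre p * qre q - qi p * qi q - qj p * qj q - qk p * qk q)
   (qre p * qi q + qi p * qre q + qj p * qk q - qk p * qj q)
   (qre p * qj q - qi p * qk q + qj p * qre q + qk p * qi q)
   (qre p * qk q + qi p * qj q - qj p * qi q + qk p * qre q)"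
instance ..
end

definition qreal :: "real \<Rightarrow> quat" where
  "qreal r = Quat r 0 0 0"

definition qscale :: "real \<Rightarrow> quat \<Rightarrow> quat" where
  "qscale r q = Quat (r * qre q) (r * qi q) (r * qj q) (r * qk q)"

definition qim :: "quat \<Rightarrow> quat" where
  "qim q = Quat 0 (qi q) (qj q) (qk q)"

definition imnorm :: "quat \<Rightarrow> real" where
  "imnorm q = sqrt ((qi q)\<^sup>2 + (qj q)\<^sup>2 + (qk q)\<^sup>2)"

definition Sph :: "quat set" where
  "Sph = {q. qre q = 0 \<and> imnorm q = 1}"

definition LJ :: "quat \<Rightarrow> quat set" where
  "LJ I = {q. \<exists>x y. q = qreal x + qscale y I}"

definition pt :: "real \<Rightarrow> real \<Rightarrow> quat \<Rightarrow> quat" where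
  "pt x y I = qreal x + qscale y I"

definition cx_to_LJ :: "quat \<Rightarrow> complex \<Rightarrow> quat" where
  "cx_to_LJ J z = pt (Re z) (Im z) J"

definition LJ_to_cx :: "quat \<Rightarrow> quat \<Rightarrow> complex" where
  "LJ_to_cx J q = Complex (qre q) (qi q * qi J + qj q * qj J + qk q * qk J)"

definition domain_in_LJ :: "quat \<Rightarrow> quat set \<Rightarrow> bool" where
  "domain_in_LJ J \<Omega> \<longleftrightarrow> \<Omega> \<subseteq> LJ J \<and>
     open (cx_to_LJ J -` \<Omega>) \<and> connected (cx_to_LJ J -` \<Omega>)"

definition holo_LJ :: "quat \<Rightarrow> quat set \<Rightarrow> (quat \<Rightarrow> quat) \<Rightarrow> bool" where
  "holo_LJ J \<Omega> f \<longleftrightarrow> f ` \<Omega> \<subseteq> LJ J \<and>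
     (\<lambda>z. LJ_to_cx J (f (cx_to_LJ J z))) holomorphic_on (cx_to_LJ J -` \<Omega>)"

definition sym_completion :: "quat \<Rightarrow> quat set \<Rightarrow> quat set" where
  "sym_completion J \<Omega> = {q. \<exists>x y L. pt x y J \<in> \<Omega> \<and> L \<in> Sph \<and> q = pt x y L}"

text \<open>Regular extension: \<open>f~(x+yI) = \<onehalf>[f(x+yJ)+f(x-yJ)] + I \<onehalf>[J(f(x-yJ)-f(x+yJ))]\<close>,
  evaluated at the representation \<open>x = Re q\<close>, \<open>y = |Im q|\<close>, \<open>I = Im q/|Im q|\<close>
  (the formula is independent of the representation; for real \<open>q\<close> any \<open>I\<close> gives \<open>f(x)\<close>).\<close>
definition reg_ext :: "quat \<Rightarrow> (quat \<Rightarrow> quat) \<Rightarrow> quat \<Rightarrow> quat" where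
  "reg_ext J f q =
     (let x = qre q; y = imnorm q;
          I = (if y = 0 then J else qscale (1 / y) (qim q))
      in qscale (1/2) (f (pt x y J) + f (pt x (- y) J))
         + I * qscale (1/2) (J * (f (pt x (- y) J) - f (pt x y J))))"

end

theory Submission
  imports Defs
begin

text \<open>For \<open>y \<noteq> 0\<close> and \<open>L \<in> \<bbbS>\<close> the regular extension is affine in the unit:
  \<open>f~(x + yL) = \<alpha> + L\<beta>\<close> with \<open>\<alpha> = (a + b)/2\<close>, \<open>\<beta> = J(b - a)/2\<close>, \<open>a = f(x + yJ)\<close>,
  \<open>b = f(x - yJ)\<close>. Evaluating at \<open>L\<close> and \<open>-L\<close> shows that \<open>\<alpha> + L\<beta>\<close> vanishes on all of \<open>\<bbbS>\<close>
  iff \<open>\<alpha> = \<beta> = 0\<close>, because \<open>L\<^sup>2 = -1\<close> makes left multiplication by a unit injective;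
  and \<open>\<alpha> = \<beta> = 0\<close> iff \<open>a = b = 0\<close>. The argument is purely algebraic.\<close>

lemma quat_eqI:
  "qre p = qre q \<Longrightarrow> qi p = qi q \<Longrightarrow> qj p = qj q \<Longrightarrow> qk p = qk q \<Longrightarrow> p = q"
  by (cases p; cases q) auto

lemma quat_eq_0_iff: "q = 0 \<longleftrightarrow> qre q = 0 \<and> qi q = 0 \<and> qj q = 0 \<and> qk q = 0"
  by (cases q) (auto simp: zero_quat_def)

lemma qscale_eq_0_iff: "qscale r q = 0 \<longleftrightarrow> r = 0 \<or> q = 0"
  by (auto simp: quat_eq_0_iff qscale_def)

lemma Sph_iff: "L \<in> Sph \<longleftrightarrow> qre L = 0 \<and> (qi L)\<^sup>2 + (qj L)\<^sup>2 + (qk L)\<^sup>2 = 1"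
  unfolding Sph_def imnorm_def by (auto simp: real_sqrt_eq_1_iff)

lemma uminus_Sph: "L \<in> Sph \<Longrightarrow> - L \<in> Sph"
  by (simp add: Sph_iff uminus_quat_def)

lemma quat_i_in_Sph: "Quat 0 1 0 0 \<in> Sph"
  by (simp add: Sph_iff)

lemma Sph_mult_Sph_mult:
  assumes "L \<in> Sph" shows "L * (L * q) = - q"
proof -
  have re: "qre L = 0" and norm: "(qi L)\<^sup>2 + (qj L)\<^sup>2 + (qk L)\<^sup>2 = 1"
    using assms by (simp_all add: Sph_iff)
  have "L * (L * q) = qscale (- ((qi L)\<^sup>2 + (qj L)\<^sup>2 + (qk L)\<^sup>2)) q"
    using re by (intro quat_eqI) (simp_all add: times_quat_def qscale_def power2_eq_square algebra_simps)
  then show ?thesis by (simp add: norm qscale_def uminus_quat_def)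
qed

lemma Sph_mult_eq_0_iff:
  assumes "L \<in> Sph" shows "L * q = 0 \<longleftrightarrow> q = 0"
proof
  assume "L * q = 0"
  then have "L * (L * q) = 0" by (simp add: times_quat_def zero_quat_def)
  then show "q = 0" using Sph_mult_Sph_mult[OF assms] by (simp add: quat_eq_0_iff uminus_quat_def)
qed (simp add: times_quat_def zero_quat_def)

lemma qre_pt_Sph: "L \<in> Sph \<Longrightarrow> qre (pt x y L) = x"
  by (simp add: Sph_iff pt_def qreal_def qscale_def plus_quat_def)

lemma imnorm_pt_Sph: "L \<in> Sph \<Longrightarrow> imnorm (pt x y L) = \<bar>y\<bar>"
proof -
  assume "L \<in> Sph"
  then have "(qi (pt x y L))\<^sup>2 + (qj (pt x y L))\<^sup>2 + (qk (pt x y L))\<^sup>2 = y\<^sup>2"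
    by (simp add: Sph_iff pt_def qreal_def qscale_def plus_quat_def power_mult_distrib
        flip: distrib_left)
  then show ?thesis by (simp add: imnorm_def)
qed

lemma reg_ext_pt_Sph:
  assumes L: "L \<in> Sph" and y: "y \<noteq> 0"
  shows "reg_ext J f (pt x y L) =
     qscale (1/2) (f (pt x y J) + f (pt x (- y) J))
     + L * qscale (1/2) (J * (f (pt x (- y) J) - f (pt x y J)))"
proof -
  have unit: "qscale (1 / \<bar>y\<bar>) (qim (pt x y L)) = (if y > 0 then L else - L)"
    using y L by (intro quat_eqI)
      (auto simp: Sph_iff qscale_def qim_def pt_def qreal_def plus_quat_def uminus_quat_def)
  \<comment> \<open>for \<open>y < 0\<close> the definition evaluates at \<open>x + |y|(-L)\<close>, which swaps the roles of \<open>a\<close> and \<open>b\<close>\<close>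
  have swap: "qscale (1/2) (b + a) + (- L) * qscale (1/2) (J * (a - b)) =
      qscale (1/2) (a + b) + L * qscale (1/2) (J * (b - a))" for a b :: quat
    by (intro quat_eqI) (simp_all add: qscale_def plus_quat_def times_quat_def minus_quat_def
        uminus_quat_def algebra_simps)
  show ?thesis
  proof (cases "y > 0")
    case True
    then show ?thesis
      unfolding reg_ext_def Let_def qre_pt_Sph[OF L] imnorm_pt_Sph[OF L] unit by simp
  next
    case False
    then have "\<bar>y\<bar> = - y" by simp
    then show ?thesis
      using y False swap unfolding reg_ext_def Let_def qre_pt_Sph[OF L] imnorm_pt_Sph[OF L] unit
      by simp
  qed
qed

lemma affine_in_Sph_eq_0_iff: "(\<forall>L\<in>Sph. A + L * B = 0) \<longleftrightarrow> A = 0 \<and> B = 0"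
proof
  assume vanish: "\<forall>L\<in>Sph. A + L * B = 0"
  define L :: quat where "L = Quat 0 1 0 0"
  have L: "L \<in> Sph" using quat_i_in_Sph by (simp add: L_def)
  have "A + L * B = 0" "A + (- L) * B = 0" using vanish L uminus_Sph by blast+
  then have "L * B = 0" "A = 0"
    by (simp_all add: quat_eq_0_iff plus_quat_def times_quat_def uminus_quat_def)
  then show "A = 0 \<and> B = 0" using Sph_mult_eq_0_iff[OF L] by simp
qed (simp add: quat_eq_0_iff plus_quat_def times_quat_def)

lemma reg_ext_coeffs_eq_0_iff:
  assumes "J \<in> Sph"
  shows "qscale (1/2) (a + b) = 0 \<and> qscale (1/2) (J * (b - a)) = 0 \<longleftrightarrow> a = 0 \<and> b = 0"
proof -
  have "a + b = 0 \<and> b - a = 0 \<longleftrightarrow> a = 0 \<and> b = 0"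
    unfolding quat_eq_0_iff by (auto simp: plus_quat_def minus_quat_def)
  then show ?thesis by (simp add: qscale_eq_0_iff Sph_mult_eq_0_iff[OF assms])
qed

theorem proposition5p2:
  fixes J :: quat and \<Omega> :: "quat set" and f :: "quat \<Rightarrow> quat"
    and x0 y0 :: real
  assumes "J \<in> Sph"
    and "domain_in_LJ J \<Omega>"
    and "\<forall>x y. pt x y J \<in> \<Omega> \<longrightarrow> pt x (- y) J \<in> \<Omega>"
    and "\<exists>x. qreal x \<in> \<Omega>"
    and "holo_LJ J \<Omega> f"
    and "pt x0 y0 J \<in> sym_completion J \<Omega>"
    and "reg_ext J f (pt x0 y0 J) = 0"
    and "y0 \<noteq> 0"
  shows "(\<forall>L\<in>Sph. reg_ext J f (pt x0 y0 L) = 0) \<longleftrightarrow>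
         (f (pt x0 y0 J) = 0 \<and> f (pt x0 (- y0) J) = 0)"
  using reg_ext_pt_Sph[OF _ \<open>y0 \<noteq> 0\<close>] affine_in_Sph_eq_0_iff
    reg_ext_coeffs_eq_0_iff[OF \<open>J \<in> Sph\<close>]
  by simp

end
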